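(* Let $t\ge3$ and let $p_1,\dots,p_t$ be distinct primes, $n=p_1p_2\cdots p_t$. Then $i(X_n)\le 4p_1p_2\cdots p_{t-3}$ (the empty product being $1$ when $t=3$).
   Context: $X_n$ is the graph on $\{0,\dots,n-1\}$ with $a,b$ adjacent iff $\gcd(a-b,n)=1$. $i(G)$ is the minimum size of a maximal (under inclusion) independent set of $G$. *)

theory Defs
  imports Main "HOL-Computational_Algebra.Primes"
begin

definition X_adj :: "nat \<Rightarrow> nat \<Rightarrow> nat \<Rightarrow> bool" where
  "X_adj n a b \<longleftrightarrow> gcd (int a - int b) (int n) = 1"

definition X_verts :: "nat \<Rightarrow> nat set" where
  "X_verts n = {0..<n}"

definition indep_set :: "'a set \<Rightarrow> ('a \<Rightarrow> 'a \<Rightarrow> bool) \<Rightarrow> 'a set \<Rightarrow> bool" where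
  "indep_set V E S \<longleftrightarrow> S \<subseteq> V \<and> (\<forall>a\<in>S. \<forall>b\<in>S. a \<noteq> b \<longrightarrow> \<not> E a b)"

definition maximal_indep_set :: "'a set \<Rightarrow> ('a \<Rightarrow> 'a \<Rightarrow> bool) \<Rightarrow> 'a set \<Rightarrow> bool" where
  "maximal_indep_set V E S \<longleftrightarrow> indep_set V E S \<and>
     (\<forall>T. indep_set V E T \<and> S \<subseteq> T \<longrightarrow> T = S)"

definition indep_dom_num :: "'a set \<Rightarrow> ('a \<Rightarrow> 'a \<Rightarrow> bool) \<Rightarrow> nat" where
  "indep_dom_num V E = Min (card ` {S. maximal_indep_set V E S})"

end

theory Submission
  imports Defs "HOL-Number_Theory.Cong"
begin

text \<open>Write \<open>n = m a b c\<close> with \<open>a, b, c\<close> the last three primes, and take the vertices whose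
  residues modulo \<open>a, b, c\<close> form one of the four binary triples of even weight. Any two such
  triples agree in some coordinate, so two of these vertices are congruent modulo one of \<open>a, b, c\<close>
  and hence non-adjacent. Every other residue triple differs in all three coordinates from one
  of the four, so by the Chinese remainder theorem a vertex \<open>v\<close> outside the set is adjacent to
  the chosen vertex with that triple and with residue \<open>v + 1\<close> modulo \<open>m\<close>. The set is therefore a
  maximal independent set, and it has at most \<open>4 m\<close> elements.\<close>

lemma maximal_indep_setI:
  assumes "indep_set V E S" and "\<And>v. v \<in> V \<Longrightarrow> v \<notin> S \<Longrightarrow> \<exists>s\<in>S. E v s"
  shows "maximal_indep_set V E S"
  unfolding maximal_indep_set_def
proof (intro conjI allI impI assms(1))
  fix T assume T: "indep_set V E T \<and> S \<subseteq> T"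
  show "T = S"
  proof (rule ccontr)
    assume "T \<noteq> S"
    with T obtain v where "v \<in> T" "v \<notin> S" "v \<in> V" by (auto simp: indep_set_def)
    with assms(2) obtain s where "s \<in> S" "E v s" by blast
    moreover from \<open>s \<in> S\<close> \<open>v \<notin> S\<close> T have "s \<in> T" "s \<noteq> v" by auto
    moreover have "\<forall>x\<in>T. \<forall>y\<in>T. x \<noteq> y \<longrightarrow> \<not> E x y"
      using T by (simp add: indep_set_def)
    ultimately show False
      using \<open>v \<in> T\<close> by metis
  qed
qed

lemma indep_dom_num_le:
  assumes "finite V" and "maximal_indep_set V E S"
  shows "indep_dom_num V E \<le> card S"
proof -
  have "{S. maximal_indep_set V E S} \<subseteq> Pow V"
    by (auto simp: maximal_indep_set_def indep_set_def)
  then have "finite {S. maximal_indep_set V E S}"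
    using assms(1) finite_subset by blast
  then show ?thesis
    unfolding indep_dom_num_def using assms(2) by (intro Min_le finite_imageI) auto
qed

lemma X_adj_iff:
  "X_adj n x y \<longleftrightarrow> (\<forall>q. prime q \<longrightarrow> q dvd n \<longrightarrow> \<not> [x = y] (mod q))"
proof
  assume adj: "X_adj n x y"
  show "\<forall>q. prime q \<longrightarrow> q dvd n \<longrightarrow> \<not> [x = y] (mod q)"
  proof (intro allI impI notI)
    fix q :: nat assume "prime q" "q dvd n" "[x = y] (mod q)"
    then have "int q dvd gcd (int x - int y) (int n)"
      by (simp add: cong_iff_dvd_diff flip: cong_int_iff)
    with adj \<open>prime q\<close> show False by (simp add: X_adj_def)
  qed
next
  assume noncong: "\<forall>q. prime q \<longrightarrow> q dvd n \<longrightarrow> \<not> [x = y] (mod q)"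
  show "X_adj n x y"
  proof (rule ccontr)
    assume "\<not> X_adj n x y"
    then have "\<bar>gcd (int x - int y) (int n)\<bar> \<noteq> 1" by (simp add: X_adj_def)
    then obtain r where r: "prime r" "r dvd gcd (int x - int y) (int n)"
      by (rule prime_factor_int)
    define q where "q = nat r"
    have "int q = r" using r(1) by (simp add: q_def prime_ge_0_int)
    with r have "prime q" "q dvd n" "[x = y] (mod q)"
      by (auto simp: cong_iff_dvd_diff simp flip: cong_int_iff)
    with noncong show False by blast
  qed
qed

lemma not_X_adj_if_cong: "prime q \<Longrightarrow> q dvd n \<Longrightarrow> [x = y] (mod q) \<Longrightarrow> \<not> X_adj n x y"
  using X_adj_iff by blast

definition even_triples :: "(nat \<times> nat \<times> nat) set" where
  "even_triples = {(0,0,0), (0,1,1), (1,0,1), (1,1,0)}"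

lemma card_even_triples: "card even_triples = 4"
  by (simp add: even_triples_def)

lemma even_triples_bounded: "(\<alpha>, \<beta>, \<gamma>) \<in> even_triples \<Longrightarrow> \<alpha> \<le> 1 \<and> \<beta> \<le> 1 \<and> \<gamma> \<le> 1"
  by (auto simp: even_triples_def)

lemma even_triples_agree:
  "(\<alpha>, \<beta>, \<gamma>) \<in> even_triples \<Longrightarrow> (\<alpha>', \<beta>', \<gamma>') \<in> even_triples \<Longrightarrow>
    \<alpha> = \<alpha>' \<or> \<beta> = \<beta>' \<or> \<gamma> = \<gamma>'"
  by (auto simp: even_triples_def)

lemma even_triples_avoid:
  "(\<alpha>, \<beta>, \<gamma>) \<notin> even_triples \<Longrightarrow>
    \<exists>\<alpha>' \<beta>' \<gamma>'. (\<alpha>', \<beta>', \<gamma>') \<in> even_triples \<and> \<alpha>' \<noteq> \<alpha> \<and> \<beta>' \<noteq> \<beta> \<and> \<gamma>' \<noteq> \<gamma>"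
  unfolding even_triples_def by (simp add: ex_disj_distrib) presburger

definition even_residue_set :: "nat \<Rightarrow> nat \<Rightarrow> nat \<Rightarrow> nat \<Rightarrow> nat set" where
  "even_residue_set n a b c = {x. x < n \<and> (x mod a, x mod b, x mod c) \<in> even_triples}"

lemma indep_set_even_residue_set:
  assumes "prime a" "prime b" "prime c" "a dvd n" "b dvd n" "c dvd n"
  shows "indep_set (X_verts n) (X_adj n) (even_residue_set n a b c)"
  unfolding indep_set_def
proof (intro conjI ballI impI)
  show "even_residue_set n a b c \<subseteq> X_verts n"
    by (auto simp: even_residue_set_def X_verts_def)
next
  fix x y assume "x \<in> even_residue_set n a b c" "y \<in> even_residue_set n a b c"
  then have "(x mod a, x mod b, x mod c) \<in> even_triples" "(y mod a, y mod b, y mod c) \<in> even_triples"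
    by (simp_all add: even_residue_set_def)
  then have "[x = y] (mod a) \<or> [x = y] (mod b) \<or> [x = y] (mod c)"
    unfolding cong_def by (rule even_triples_agree)
  with assms show "\<not> X_adj n x y"
    using not_X_adj_if_cong by blast
qed

lemma card_even_residue_set_le:
  assumes "coprime a b" "coprime (a * b) c"
  shows "card (even_residue_set (m * (a * b * c)) a b c) \<le> 4 * m"
proof (cases "a * b * c = 0")
  case True
  then show ?thesis by (simp only: mult_0_right even_residue_set_def) simp
next
  case False
  let ?S = "even_residue_set (m * (a * b * c)) a b c"
  let ?f = "\<lambda>x. ((x mod a, x mod b, x mod c), x div (a * b * c))"
  have "inj_on ?f ?S"
  proof (rule inj_onI)
    fix x y assume "?f x = ?f y"
    then have "[x = y] (mod a)" "[x = y] (mod b)" "[x = y] (mod c)" "x div (a*b*c) = y div (a*b*c)"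
      by (simp_all add: cong_def)
    with assms have "[x = y] (mod a * b * c)" "x div (a*b*c) = y div (a*b*c)"
      by (simp_all add: coprime_cong_mult_nat)
    then show "x = y"
      by (metis cong_def div_mult_mod_eq)
  qed
  moreover have "?f ` ?S \<subseteq> even_triples \<times> {..<m}"
    using False by (auto simp: even_residue_set_def div_less_iff_less_mult)
  ultimately have "card ?S \<le> card (even_triples \<times> {..<m})"
    by (rule card_inj_on_le) (simp add: even_triples_def)
  then show ?thesis
    by (simp add: card_cartesian_product card_even_triples)
qed

lemma chinese_remainder_four_nat:
  fixes m a b c :: nat
  assumes "coprime a b" "coprime a c" "coprime b c" "coprime m (a * b * c)" "m * (a * b * c) \<noteq> 0"
  shows "\<exists>s < m * (a * b * c). [s = r] (mod m) \<and> [s = \<alpha>] (mod a) \<and> [s = \<beta>] (mod b) \<and> [s = \<gamma>] (mod c)"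
proof -
  define M where "M = (!) [m, a, b, c]"
  define u where "u = (!) [r, \<alpha>, \<beta>, \<gamma>]"
  have "\<forall>i\<in>{0, 1, 2, 3}. \<forall>j\<in>{0, 1, 2, 3}. i \<noteq> j \<longrightarrow> coprime (M i) (M j)"
    using assms(1-4) by (auto simp: M_def coprime_commute)
  then obtain x where "\<forall>i\<in>{0, 1, 2, 3}. [x = u i] (mod M i)"
    using chinese_remainder_nat[of "{0, 1, 2, 3}" M u] by auto
  then have x: "[x = r] (mod m)" "[x = \<alpha>] (mod a)" "[x = \<beta>] (mod b)" "[x = \<gamma>] (mod c)"
    by (auto simp: M_def u_def)
  define s where "s = x mod (m * (a * b * c))"
  have s_x: "[s = x] (mod q)" if "q dvd m * (a * b * c)" for q
    using that by (simp add: s_def cong_def mod_mod_cancel)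
  have "[s = r] (mod m)" "[s = \<alpha>] (mod a)" "[s = \<beta>] (mod b)" "[s = \<gamma>] (mod c)"
    by (auto intro: cong_trans[OF s_x x(1)] cong_trans[OF s_x x(2)] cong_trans[OF s_x x(3)]
        cong_trans[OF s_x x(4)])
  moreover have "s < m * (a * b * c)"
    using assms(5) by (simp add: s_def)
  ultimately show ?thesis by blast
qed

lemma ex_X_adj_in_even_residue_set:
  assumes "prime a" "prime b" "prime c" "a \<noteq> b" "a \<noteq> c" "b \<noteq> c" "coprime m (a * b * c)"
    and n: "n = m * (a * b * c)"
    and v: "v < n" "v \<notin> even_residue_set n a b c"
  shows "\<exists>s\<in>even_residue_set n a b c. X_adj n v s"
proof -
  from v obtain \<alpha> \<beta> \<gamma> where pattern: "(\<alpha>, \<beta>, \<gamma>) \<in> even_triples"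
    and avoid: "\<alpha> \<noteq> v mod a" "\<beta> \<noteq> v mod b" "\<gamma> \<noteq> v mod c"
    using even_triples_avoid[of "v mod a" "v mod b" "v mod c"] by (auto simp: even_residue_set_def)
  have "n \<noteq> 0"
    using v(1) by simp
  with assms(1-7) obtain s where "s < n" and s_m: "[s = v + 1] (mod m)"
    and "[s = \<alpha>] (mod a)" "[s = \<beta>] (mod b)" "[s = \<gamma>] (mod c)"
    using chinese_remainder_four_nat[of a b c m] unfolding n by (metis primes_coprime)
  moreover have "\<alpha> < a" "\<beta> < b" "\<gamma> < c"
    using even_triples_bounded[OF pattern] prime_ge_2_nat[OF assms(1)] prime_ge_2_nat[OF assms(2)]
      prime_ge_2_nat[OF assms(3)] by linarith+
  ultimately have residues: "s mod a = \<alpha>" "s mod b = \<beta>" "s mod c = \<gamma>"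
    by (simp_all add: cong_def)
  with \<open>s < n\<close> pattern have s_in: "s \<in> even_residue_set n a b c"
    by (simp add: even_residue_set_def)
  have "\<not> [v = s] (mod q)" if "prime q" "q dvd n" for q
  proof
    assume vs: "[v = s] (mod q)"
    from that consider "q dvd m" | "q = a" | "q = b" | "q = c"
      using assms(1-3) unfolding n by (metis prime_dvd_mult_iff primes_dvd_imp_eq)
    then show False
    proof cases
      case 1
      then have "[v = v + 1] (mod q)"
        using cong_trans[OF vs cong_dvd_modulus_nat[OF s_m]] by blast
      then have "q dvd 1"
        by (simp add: cong_iff_dvd_diff flip: cong_int_iff)
      with \<open>prime q\<close> show False by simp
    qed (use vs residues avoid in \<open>simp_all add: cong_def\<close>)
  qed
  then have "X_adj n v s"
    by (simp add: X_adj_iff)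
  with s_in show ?thesis ..
qed

lemma indep_dom_num_X_le:
  assumes "prime a" "prime b" "prime c" "a \<noteq> b" "a \<noteq> c" "b \<noteq> c" "coprime m (a * b * c)"
  shows "indep_dom_num (X_verts (m * (a * b * c))) (X_adj (m * (a * b * c))) \<le> 4 * m"
proof -
  define n where "n = m * (a * b * c)"
  let ?S = "even_residue_set n a b c"
  have "indep_set (X_verts n) (X_adj n) ?S"
    using assms(1-3) by (intro indep_set_even_residue_set) (simp_all add: n_def)
  moreover have "\<exists>s\<in>?S. X_adj n v s" if "v \<in> X_verts n" "v \<notin> ?S" for v
    using ex_X_adj_in_even_residue_set[OF assms n_def] that by (simp add: X_verts_def)
  ultimately have "maximal_indep_set (X_verts n) (X_adj n) ?S"
    by (rule maximal_indep_setI)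
  then have "indep_dom_num (X_verts n) (X_adj n) \<le> card ?S"
    by (intro indep_dom_num_le) (simp_all add: X_verts_def)
  also have "card ?S \<le> 4 * m"
    using assms(1-6) unfolding n_def by (intro card_even_residue_set_le) (simp_all add: primes_coprime)
  finally show ?thesis
    by (simp add: n_def)
qed

theorem theorem4p10:
  fixes t n :: nat and p :: "nat \<Rightarrow> nat"
  assumes "t \<ge> 3"
    and "\<forall>i\<in>{1..t}. prime (p i)"
    and "inj_on p {1..t}"
    and "n = (\<Prod>i=1..t. p i)"
  shows "indep_dom_num (X_verts n) (X_adj n) \<le> 4 * (\<Prod>i=1..t-3. p i)"
proof -
  define k where "k = t - 3"
  define m where "m = (\<Prod>i=1..k. p i)"
  have t: "t = k + 3"
    using assms(1) by (simp add: k_def)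
  have prime: "prime (p i)" if "i \<in> {1..k + 3}" for i
    using assms(2) that by (simp add: t)
  have distinct: "p i \<noteq> p j" if "i \<in> {1..k + 3}" "j \<in> {1..k + 3}" "i \<noteq> j" for i j
    using inj_onD[OF assms(3)] that by (auto simp: t)
  have "n = m * (p (k + 1) * p (k + 2) * p (k + 3))"
    by (simp add: assms(4) t m_def prod.nat_ivl_Suc' numeral_3_eq_3 mult_ac)
  moreover have "coprime m (p (k + 1) * p (k + 2) * p (k + 3))"
    unfolding m_def by (intro prod_coprime_left) (auto simp: primes_coprime prime distinct)
  ultimately have "indep_dom_num (X_verts n) (X_adj n) \<le> 4 * m"
    using indep_dom_num_X_le prime distinct by simp
  then show ?thesis
    by (simp add: m_def k_def)
qed

end
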